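(* Let $d\ge2$ and $c\in\mathbb{C}_p$ (no further conditions). The sequence $(a_n)$ satisfies: (1) for $1\le n<d$, $a_n=\binom{1/d}{n}c^n$; (2) for $d^i\le n<d^{i+1}$ with $i\ge1$, $$a_n=\sum\alpha(n_0,n_1,\dots,n_{d^i-1}),$$ where the sum runs over all tuples of non-negative integers $(n_0,\dots,n_{d^i-1})$ with $n_0+d\sum_{k=1}^{d^i-1}kn_k=n$, and $$\alpha(n_0,\dots,n_{d^i-1})=\frac{c^{n_0}}{d^{n_0}n_0!}\prod_{k=1}^{d^i-1}\frac{a_k^{n_k}}{d^{n_k}n_k!}\prod_{j=0}^{\sum_{k=0}^{d^i-1}n_k-1}(1-jd).$$
   Context: Let $\mathbb{C}_p$ be the completion of an algebraic closure of $\mathbb{Q}_p$, $d\ge2$ an integer, $c\in\mathbb{C}_p$, and $(a_n)_{n\ge1}$ the unique sequence in $\mathbb{C}_p$ with the formal identity $\left(1+\sum_{n\ge1}a_nx^n\right)^d=1+cx+\sum_{n\ge1}a_nx^{nd}$. $\binom{1/d}{n}$ is the generalized binomial coefficient. *)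

theory Defs
  imports "HOL-Computational_Algebra.Formal_Power_Series"
begin

text \<open>The defining identity of the sequence (a_n), n \<ge> 1:
  (1 + sum_{n\<ge>1} a_n x^n)^d = 1 + c x + sum_{n\<ge>1} a_n x^{n d}.
  The value a 0 is irrelevant and ignored.\<close>

definition seq_fps :: "(nat \<Rightarrow> 'a::field) \<Rightarrow> 'a fps" where
  "seq_fps a = Abs_fps (\<lambda>n. if n = 0 then 1 else a n)"

definition seq_fps_pow :: "nat \<Rightarrow> (nat \<Rightarrow> 'a::field) \<Rightarrow> 'a fps" where
  "seq_fps_pow d a = Abs_fps (\<lambda>m. if 0 < m \<and> d dvd m then a (m div d) else 0)"

definition defining_identity :: "nat \<Rightarrow> 'a::field \<Rightarrow> (nat \<Rightarrow> 'a) \<Rightarrow> bool" where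
  "defining_identity d c a \<longleftrightarrow>
     (seq_fps a) ^ d = 1 + fps_const c * fps_X + seq_fps_pow d a"

text \<open>The coefficient alpha(n_0,...,n_{d^i-1}); the tuple is a function t with t k = 0 for k \<ge> d^i.\<close>

definition alpha :: "nat \<Rightarrow> nat \<Rightarrow> 'a::field_char_0 \<Rightarrow> (nat \<Rightarrow> 'a) \<Rightarrow> (nat \<Rightarrow> nat) \<Rightarrow> 'a" where
  "alpha d i c a t =
     c ^ t 0 / (of_nat d ^ t 0 * fact (t 0))
     * (\<Prod>k\<in>{1..<d^i}. a k ^ t k / (of_nat d ^ t k * fact (t k)))
     * (\<Prod>j<(\<Sum>k<d^i. t k). 1 - of_nat j * of_nat d)"

definition tuples :: "nat \<Rightarrow> nat \<Rightarrow> nat \<Rightarrow> (nat \<Rightarrow> nat) set" where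
  "tuples d i n = {t. (\<forall>k\<ge>d^i. t k = 0) \<and> t 0 + d * (\<Sum>k\<in>{1..<d^i}. k * t k) = n}"

end

theory Submission
  imports Defs "HOL-Library.FuncSet"
begin

unbundle fps_syntax

text \<open>
  The series \<open>A = 1 + \<Sum> a_n x^n\<close> is the unique \<open>d\<close>-th root with constant term 1 of \<open>1 + Y\<close>,
  where \<open>Y = c x + \<Sum> a_n x^(n d)\<close>; hence \<open>A = \<Sum>_m binom(1/d, m) Y^m\<close>. The coefficient of
  \<open>x^n\<close> in \<open>Y^m\<close> only involves coefficients of \<open>Y\<close> of degree at most \<open>n\<close>, and for
  \<open>n < d^(i+1)\<close> these agree with those of the polynomial \<open>c x + \<Sum>_(1 \<le> k < d^i) a_k x^(k d)\<close>.
  Expanding its powers by the multinomial theorem gives the formula, because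
  \<open>binom(1/d, m) m! d^m = \<Prod>_(j<m) (1 - j d)\<close>.
\<close>

definition exponent_tuples :: "nat \<Rightarrow> nat \<Rightarrow> (nat \<Rightarrow> nat) set" where
  "exponent_tuples N m = {t. (\<forall>k\<ge>N. t k = 0) \<and> (\<Sum>k<N. t k) = m}"

lemma finite_exponent_tuples: "finite (exponent_tuples N m)"
proof -
  let ?extend = "\<lambda>g k. if k < N then g k else 0"
  have "exponent_tuples N m \<subseteq> ?extend ` PiE {..<N} (\<lambda>_. {..m})"
  proof
    fix t assume t: "t \<in> exponent_tuples N m"
    have "t k \<le> m" if "k < N" for k
      using t member_le_sum[of k "{..<N}" t] that by (simp add: exponent_tuples_def)
    hence "restrict t {..<N} \<in> PiE {..<N} (\<lambda>_. {..m})" by auto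
    moreover have "t = ?extend (restrict t {..<N})"
      using t by (auto simp: exponent_tuples_def fun_eq_iff)
    ultimately show "t \<in> ?extend ` PiE {..<N} (\<lambda>_. {..m})" by blast
  qed
  thus ?thesis by (rule finite_subset) (auto intro: finite_PiE)
qed

lemma bij_betw_exponent_tuples_Suc:
  "bij_betw (\<lambda>u. (u N, u(N := 0))) (exponent_tuples (Suc N) m)
     (SIGMA j:{..m}. exponent_tuples N (m - j))"
proof (rule bij_betw_byWitness[where f' = "\<lambda>(j, t). t(N := j)"])
  have below_N: "(\<Sum>k<N. (t(N := j)) k) = (\<Sum>k<N. t k)" for t :: "nat \<Rightarrow> nat" and j
    by (intro sum.cong) auto
  show "(\<lambda>u. (u N, u(N := 0))) ` exponent_tuples (Suc N) m \<subseteq> (SIGMA j:{..m}. exponent_tuples N (m - j))"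
    using below_N[of _ 0] by (auto simp: exponent_tuples_def)
  show "(\<lambda>(j, t). t(N := j)) ` (SIGMA j:{..m}. exponent_tuples N (m - j)) \<subseteq> exponent_tuples (Suc N) m"
    using below_N by (auto simp: exponent_tuples_def)
qed (auto simp: exponent_tuples_def)

lemma fps_power_sum_multinomial:
  fixes f :: "nat \<Rightarrow> 'a::field_char_0 fps"
  shows "(\<Sum>k<N. f k) ^ m = (\<Sum>t\<in>exponent_tuples N m.
           fps_const (fact m / (\<Prod>k<N. fact (t k))) * (\<Prod>k<N. f k ^ t k))"
proof (induction N arbitrary: m)
  case 0
  have "exponent_tuples 0 m = (if m = 0 then {\<lambda>_. 0} else {})"
    by (auto simp: exponent_tuples_def)
  thus ?case by simp
next
  case (Suc N)
  define S where "S = (\<Sum>k<N. f k)"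
  define H where "H = (\<lambda>(j, t). fps_const (fact m / (fact j * (\<Prod>k<N. fact (t k))))
                                  * ((\<Prod>k<N. f k ^ t k) * f N ^ j))"
  have "(\<Sum>k<Suc N. f k) ^ m = (\<Sum>j\<le>m. of_nat (m choose j) * f N ^ j * S ^ (m - j))"
    using binomial_ring[of "f N" S m] by (simp add: S_def add.commute)
  also have "\<dots> = (\<Sum>j\<le>m. \<Sum>t\<in>exponent_tuples N (m - j). H (j, t))"
  proof (rule sum.cong[OF refl])
    fix j assume "j \<in> {..m}"
    hence "(of_nat (m choose j) :: 'a) * (fact (m - j) / (\<Prod>k<N. fact (t k)))
             = fact m / (fact j * (\<Prod>k<N. fact (t k)))" for t
      by (simp add: binomial_fact field_simps)
    hence "fps_const (of_nat (m choose j)) * fps_const (fact (m - j) / (\<Prod>k<N. fact (t k)))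
             = (fps_const (fact m / (fact j * (\<Prod>k<N. fact (t k)))) :: 'a fps)" for t
      by (metis fps_const_mult)
    hence "fps_const (of_nat (m choose j)) * f N ^ j
             * (fps_const (fact (m - j) / (\<Prod>k<N. fact (t k))) * (\<Prod>k<N. f k ^ t k)) = H (j, t)" for t
      by (simp add: H_def algebra_simps)
    thus "of_nat (m choose j) * f N ^ j * S ^ (m - j) = (\<Sum>t\<in>exponent_tuples N (m - j). H (j, t))"
      by (simp add: S_def Suc.IH sum_distrib_left fps_of_nat)
  qed
  also have "\<dots> = (\<Sum>p\<in>(SIGMA j:{..m}. exponent_tuples N (m - j)). H p)"
    by (subst sum.Sigma) (auto simp: finite_exponent_tuples)
  also have "\<dots> = (\<Sum>u\<in>exponent_tuples (Suc N) m. H (u N, u(N := 0)))"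
    by (rule sum.reindex_bij_betw[OF bij_betw_exponent_tuples_Suc, symmetric])
  also have "\<dots> = (\<Sum>u\<in>exponent_tuples (Suc N) m.
                    fps_const (fact m / (\<Prod>k<Suc N. fact (u k))) * (\<Prod>k<Suc N. f k ^ u k))"
  proof (rule sum.cong[OF refl])
    fix u :: "nat \<Rightarrow> nat"
    have "(\<Prod>k<N. fact ((u(N := 0)) k)) = (\<Prod>k<N. fact (u k))"
      "(\<Prod>k<N. f k ^ (u(N := 0)) k) = (\<Prod>k<N. f k ^ u k)"
      by (auto intro: prod.cong)
    thus "H (u N, u(N := 0)) = fps_const (fact m / (\<Prod>k<Suc N. fact (u k))) * (\<Prod>k<Suc N. f k ^ u k)"
      by (simp add: H_def mult.commute)
  qed
  finally show ?case .
qed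

lemma fps_prod_monomial_powers:
  fixes b :: "nat \<Rightarrow> 'a::field_char_0"
  shows "(\<Prod>k\<in>S. (fps_const (b k) * fps_X ^ e k) ^ t k)
           = fps_const (\<Prod>k\<in>S. b k ^ t k) * fps_X ^ (\<Sum>k\<in>S. e k * t k)"
proof (induction S rule: infinite_finite_induct)
  case (insert x F)
  have "(fps_const (b x) * fps_X ^ e x) ^ t x = fps_const (b x ^ t x) * fps_X ^ (e x * t x)"
    by (simp add: power_mult_distrib fps_const_power power_mult)
  thus ?case using insert by (simp add: power_add mult_ac)
qed auto

lemma fps_power_sum_monomials_nth:
  fixes b :: "nat \<Rightarrow> 'a::field_char_0"
  shows "(\<Sum>k<N. fps_const (b k) * fps_X ^ e k) ^ m $ n
           = (\<Sum>t\<in>{t \<in> exponent_tuples N m. (\<Sum>k<N. e k * t k) = n}.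
                fact m / (\<Prod>k<N. fact (t k)) * (\<Prod>k<N. b k ^ t k))"
proof -
  have "(\<Sum>k<N. fps_const (b k) * fps_X ^ e k) ^ m $ n
          = (\<Sum>t\<in>exponent_tuples N m. if (\<Sum>k<N. e k * t k) = n
               then fact m / (\<Prod>k<N. fact (t k)) * (\<Prod>k<N. b k ^ t k) else 0)"
    unfolding fps_power_sum_multinomial fps_sum_nth
    by (intro sum.cong) (simp_all add: fps_prod_monomial_powers del: fps_const_mult)
  thus ?thesis by (simp only: sum.inter_filter[OF finite_exponent_tuples])
qed

lemma fps_power_nth_cong:
  fixes A B :: "'a::comm_semiring_1 fps"
  assumes "\<And>j. j \<le> n \<Longrightarrow> A $ j = B $ j"
  shows "(A ^ m) $ n = (B ^ m) $ n"
  using assms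
proof (induction m arbitrary: n)
  case (Suc m)
  have "(A * A ^ m) $ n = (\<Sum>i=0..n. A $ i * A ^ m $ (n - i))" by (rule fps_mult_nth)
  also have "\<dots> = (\<Sum>i=0..n. B $ i * B ^ m $ (n - i))"
    using Suc by (intro sum.cong) auto
  also have "\<dots> = (B * B ^ m) $ n" by (rule fps_mult_nth[symmetric])
  finally show ?case by simp
qed simp

definition inner_series :: "nat \<Rightarrow> 'a::field \<Rightarrow> (nat \<Rightarrow> 'a) \<Rightarrow> 'a fps" where
  "inner_series d c a = fps_const c * fps_X + seq_fps_pow d a"

lemma seq_fps_eq_binomial_compose:
  fixes c :: "'a::field_char_0"
  assumes "0 < d" and "defining_identity d c a"
  shows "seq_fps a = fps_binomial (1 / of_nat d) oo inner_series d c a"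
proof -
  define Y where "Y = inner_series d c a"
  define C where "C = fps_binomial (1 / of_nat d) oo Y"
  obtain k where k: "d = Suc k" using \<open>0 < d\<close> by (cases d) auto
  have Y0: "Y $ 0 = 0" by (simp add: Y_def inner_series_def seq_fps_pow_def)
  have "C ^ d = fps_binomial (1 / of_nat d) ^ d oo Y"
    unfolding C_def by (rule fps_compose_power[OF Y0])
  also have "fps_binomial (1 / of_nat d) ^ d = (fps_binomial 1 :: 'a fps)"
    using \<open>0 < d\<close> by (simp add: fps_binomial_power)
  also have "\<dots> oo Y = 1 + Y" by (simp add: fps_binomial_1 fps_compose_add_distrib Y0)
  finally have "C ^ Suc k = 1 + Y" by (simp add: k)
  moreover have "seq_fps a ^ Suc k = 1 + Y"
    using assms(2) by (simp add: defining_identity_def Y_def inner_series_def add.assoc k)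
  moreover have "(1 + Y) $ 0 = 1" using Y0 by simp
  ultimately show ?thesis
    using radical_unique[of "\<lambda>_ _. 1" k "1 + Y" C] radical_unique[of "\<lambda>_ _. 1" k "1 + Y" "seq_fps a"]
    by (simp add: C_def Y_def seq_fps_def)
qed

lemma coeff_eq_gbinomial_sum:
  fixes c :: "'a::field_char_0"
  assumes "0 < d" and "defining_identity d c a" and "1 \<le> n"
  shows "a n = (\<Sum>m=0..n. ((1 / of_nat d) gchoose m) * (inner_series d c a ^ m $ n))"
proof -
  have "a n = seq_fps a $ n" using \<open>1 \<le> n\<close> by (simp add: seq_fps_def)
  thus ?thesis by (simp add: seq_fps_eq_binomial_compose[OF assms(1,2)] fps_compose_nth)
qed

text \<open>Index \<open>k = 0\<close> stands for the term \<open>c x\<close> (the paper's \<open>n\<^sub>0\<close>), index \<open>k \<ge> 1\<close> for \<open>a\<^sub>k x^(k d)\<close>.\<close>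

definition term_coeff :: "'a \<Rightarrow> (nat \<Rightarrow> 'a) \<Rightarrow> nat \<Rightarrow> 'a" where
  "term_coeff c a k = (if k = 0 then c else a k)"

definition term_degree :: "nat \<Rightarrow> nat \<Rightarrow> nat" where
  "term_degree d k = (if k = 0 then 1 else k * d)"

definition inner_poly :: "nat \<Rightarrow> nat \<Rightarrow> 'a::field \<Rightarrow> (nat \<Rightarrow> 'a) \<Rightarrow> 'a fps" where
  "inner_poly N d c a = (\<Sum>k<N. fps_const (term_coeff c a k) * fps_X ^ term_degree d k)"

lemma inner_series_nth_eq_inner_poly_nth:
  assumes "2 \<le> d" and "j < N * d"
  shows "inner_series d c a $ j = inner_poly N d c a $ j"
proof -
  have poly_nth: "inner_poly N d c a $ j = (\<Sum>k<N. if j = term_degree d k then term_coeff c a k else 0)"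
    unfolding inner_poly_def fps_sum_nth by (intro sum.cong) auto
  have series_nth: "inner_series d c a $ j
      = (if j = 1 then c else 0) + (if 0 < j \<and> d dvd j then a (j div d) else 0)"
    by (simp add: inner_series_def seq_fps_pow_def fps_X_nth)
  consider "j = 1" | "0 < j" "d dvd j" | "j \<noteq> 1" "\<not> (0 < j \<and> d dvd j)" by blast
  thus ?thesis
  proof cases
    case 1
    hence "inner_poly N d c a $ j = (\<Sum>k<N. if k = 0 then c else 0)"
      unfolding poly_nth using assms(1)
      by (intro sum.cong) (auto simp: term_degree_def term_coeff_def)
    thus ?thesis unfolding series_nth using 1 assms by (auto intro: Nat.gr0I)
  next
    case 2
    define K where "K = j div d"
    have j: "j = K * d" using 2 by (simp add: K_def)
    have "1 \<le> K" "K < N" using 2 j assms by (auto intro: Nat.gr0I)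
    have "d \<le> j" unfolding j using \<open>1 \<le> K\<close> by simp
    hence "j \<noteq> 1" using assms(1) by linarith
    have "inner_poly N d c a $ j = (\<Sum>k<N. if k = K then a K else 0)"
      unfolding poly_nth using \<open>1 \<le> K\<close> assms(1) j
      by (intro sum.cong) (auto simp: term_degree_def term_coeff_def)
    thus ?thesis unfolding series_nth using 2 \<open>K < N\<close> \<open>j \<noteq> 1\<close> by (simp add: K_def)
  next
    case 3
    hence "inner_poly N d c a $ j = 0"
      unfolding poly_nth using assms(1) by (intro sum.neutral) (auto simp: term_degree_def)
    thus ?thesis unfolding series_nth using 3 by auto
  qed
qed

lemma coeff_eq_gbinomial_power:
  fixes c :: "'a::field_char_0"
  assumes "2 \<le> d" and "defining_identity d c a" and "1 \<le> n" and "n < d"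
  shows "a n = ((1 / of_nat d) gchoose n) * c ^ n"
proof -
  have power_nth: "inner_series d c a ^ m $ n = (if m = n then c ^ n else 0)" for m
  proof -
    have "inner_series d c a $ j = (fps_const c * fps_X) $ j" if "j \<le> n" for j
    proof -
      have "inner_series d c a $ j = inner_poly 1 d c a $ j"
        using that assms(1,4) by (intro inner_series_nth_eq_inner_poly_nth) auto
      thus ?thesis by (simp add: inner_poly_def term_coeff_def term_degree_def)
    qed
    hence "inner_series d c a ^ m $ n = (fps_const c * fps_X) ^ m $ n"
      by (rule fps_power_nth_cong)
    thus ?thesis by (simp add: power_mult_distrib fps_const_power)
  qed
  have "a n = (\<Sum>m=0..n. if m = n then ((1 / of_nat d) gchoose n) * c ^ n else 0)"
    using coeff_eq_gbinomial_sum[OF _ assms(2,3)] assms(1) by (simp add: power_nth if_distrib cong: if_cong)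
  thus ?thesis by simp
qed

lemma alpha_eq_gbinomial_multinomial:
  fixes c :: "'a::field_char_0" and i :: nat
  assumes "0 < d"
  defines "N \<equiv> d ^ i"
  shows "alpha d i c a t = ((1 / of_nat d) gchoose (\<Sum>k<N. t k))
           * (fact (\<Sum>k<N. t k) / (\<Prod>k<N. fact (t k))) * (\<Prod>k<N. term_coeff c a k ^ t k)"
proof -
  define M where "M = (\<Sum>k<N. t k)"
  have "0 < N" using assms by (simp add: N_def)
  have "(of_nat d :: 'a) \<noteq> 0" using assms by simp
  have gbinomial_fact: "((1 / of_nat d) gchoose M) * fact M
      = (\<Prod>j<M. 1 - of_nat j * of_nat d) / (of_nat d :: 'a) ^ M"
  proof -
    have "((1 / of_nat d) gchoose M) * fact M = (\<Prod>j<M. (1 / of_nat d :: 'a) - of_nat j)"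
      by (simp add: gbinomial_mult_fact' atLeast0LessThan)
    also have "\<dots> = (\<Prod>j<M. (1 - of_nat j * of_nat d) / (of_nat d :: 'a))"
      using \<open>of_nat d \<noteq> 0\<close> by (intro prod.cong) (auto simp: field_simps)
    finally show ?thesis by (simp add: prod_dividef)
  qed
  have "alpha d i c a t
      = (\<Prod>k<N. term_coeff c a k ^ t k / ((of_nat d :: 'a) ^ t k * fact (t k)))
        * (\<Prod>j<M. 1 - of_nat j * of_nat d)"
    unfolding alpha_def prod.atLeast_Suc_lessThan[OF \<open>0 < N\<close>, unfolded atLeast0LessThan]
    by (simp add: M_def N_def term_coeff_def)
  also have "\<dots> = ((1 / of_nat d) gchoose M) * fact M / (\<Prod>k<N. fact (t k))
                   * (\<Prod>k<N. term_coeff c a k ^ t k)"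
    unfolding gbinomial_fact
    by (simp add: prod_dividef prod.distrib M_def power_sum field_simps)
  finally show ?thesis by (simp add: M_def)
qed

lemma tuples_eq_UN_exponent_tuples:
  assumes "0 < d"
  shows "tuples d i n = (\<Union>m\<in>{0..n}.
           {t \<in> exponent_tuples (d ^ i) m. (\<Sum>k<d ^ i. term_degree d k * t k) = n})"
proof -
  define N where "N = d ^ i"
  have "0 < N" using assms by (simp add: N_def)
  have degree_eq: "(\<Sum>k<N. term_degree d k * t k) = t 0 + d * (\<Sum>k\<in>{1..<N}. k * t k)" for t
    unfolding sum.atLeast_Suc_lessThan[OF \<open>0 < N\<close>, unfolded atLeast0LessThan]
    by (simp add: term_degree_def sum_distrib_left mult_ac)
  have total_le_degree: "(\<Sum>k<N. t k) \<le> (\<Sum>k<N. term_degree d k * t k)" for t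
    using assms by (intro sum_mono) (simp add: term_degree_def)
  have "tuples d i n = {t. (\<forall>k\<ge>N. t k = 0) \<and> (\<Sum>k<N. term_degree d k * t k) = n}"
    unfolding tuples_def N_def[symmetric] degree_eq ..
  also have "\<dots> = (\<Union>m\<in>{0..n}. {t \<in> exponent_tuples N m. (\<Sum>k<N. term_degree d k * t k) = n})"
    using total_le_degree by (auto simp: exponent_tuples_def)
  finally show ?thesis by (simp only: N_def)
qed

lemma coeff_eq_sum_alpha:
  fixes c :: "'a::field_char_0"
  assumes "2 \<le> d" and "defining_identity d c a" and "1 \<le> n" and "n < d ^ (i + 1)"
  shows "a n = (\<Sum>t\<in>tuples d i n. alpha d i c a t)"
proof -
  define N where "N = d ^ i"
  define T where "T m = {t \<in> exponent_tuples N m. (\<Sum>k<N. term_degree d k * t k) = n}" for m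
  define G where "G t = ((1 / of_nat d) gchoose (\<Sum>k<N. t k))
      * (fact (\<Sum>k<N. t k) / (\<Prod>k<N. fact (t k))) * (\<Prod>k<N. term_coeff c a k ^ t k)" for t
  have "n < N * d" using assms(4) by (simp add: N_def mult.commute)
  have "inner_series d c a ^ m $ n = inner_poly N d c a ^ m $ n" for m
    using assms(1) \<open>n < N * d\<close>
    by (intro fps_power_nth_cong inner_series_nth_eq_inner_poly_nth) auto
  hence "a n = (\<Sum>m=0..n. ((1 / of_nat d) gchoose m) * (inner_poly N d c a ^ m $ n))"
    using coeff_eq_gbinomial_sum[OF _ assms(2,3)] assms(1) by simp
  also have "\<dots> = (\<Sum>m=0..n. sum G (T m))"
    unfolding inner_poly_def fps_power_sum_monomials_nth sum_distrib_left T_def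
    by (intro sum.cong refl) (auto simp: G_def exponent_tuples_def)
  also have "\<dots> = sum G (\<Union>m\<in>{0..n}. T m)"
  proof (rule sum.UNION_disjoint[symmetric])
    show "\<forall>m\<in>{0..n}. finite (T m)" by (simp add: T_def finite_exponent_tuples)
  qed (auto simp: T_def exponent_tuples_def)
  also have "(\<Union>m\<in>{0..n}. T m) = tuples d i n"
    using assms(1) by (simp add: tuples_eq_UN_exponent_tuples T_def N_def)
  also have "sum G (tuples d i n) = (\<Sum>t\<in>tuples d i n. alpha d i c a t)"
    using assms(1) by (simp add: alpha_eq_gbinomial_multinomial G_def N_def)
  finally show ?thesis .
qed

theorem proposition3p1:
  fixes d :: nat and c :: "'a::field_char_0" and a :: "nat \<Rightarrow> 'a"
  assumes "d \<ge> 2"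
    and "defining_identity d c a"
  shows "(\<forall>n. 1 \<le> n \<and> n < d \<longrightarrow> a n = ((1 / of_nat d) gchoose n) * c ^ n)
       \<and> (\<forall>i n. 1 \<le> i \<and> d ^ i \<le> n \<and> n < d ^ (i + 1) \<longrightarrow>
              a n = (\<Sum>t\<in>tuples d i n. alpha d i c a t))"
proof (intro conjI allI impI)
  fix n assume "1 \<le> n \<and> n < d"
  thus "a n = ((1 / of_nat d) gchoose n) * c ^ n"
    using coeff_eq_gbinomial_power[OF assms] by blast
next
  fix i n assume n: "1 \<le> i \<and> d ^ i \<le> n \<and> n < d ^ (i + 1)"
  moreover have "1 \<le> d ^ i" using assms(1) by simp
  ultimately show "a n = (\<Sum>t\<in>tuples d i n. alpha d i c a t)"
    using coeff_eq_sum_alpha[OF assms] by auto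
qed

end
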